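(* The group $\mathbb{Z}^2=\langle a,b\mid aba^{-1}b^{-1}\rangle$ is $5$-chordal with respect to the generating set $\{a,b\}$.
   Context: For a group $G$ with finite generating set $S$, $S^{\pm1}=S\cup S^{-1}\setminus\{e\}$. A relation $s_1\cdots s_n=e$ with $n>2$, $s_i\in S^{\pm1}$, is simple if $s_p\cdots s_q=e$ holds exactly when $(p,q)=(1,n)$. $G$ is $k$-chordal with respect to $S$ if for every simple relation $s_1\cdots s_n=e$ with $n\ge k$ there exist $1\le i<j\le n$ and $s'_1,\dots,s'_r\in S^{\pm1}$ with $s_i\cdots s_j=s'_1\cdots s'_r$ and $r\le\min\{j-i,\,n-j+i-2\}$. *)

theory Defs
  imports "HOL-Algebra.Group"
begin

definition word_prod :: "('a, 'b) monoid_scheme \<Rightarrow> 'a list \<Rightarrow> 'a" where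
  "word_prod G xs = foldr (\<lambda>x y. x \<otimes>\<^bsub>G\<^esub> y) xs \<one>\<^bsub>G\<^esub>"

text \<open>Subword s_p ... s_q, 0-based indices p \<le> q.\<close>
definition subword :: "'a list \<Rightarrow> nat \<Rightarrow> nat \<Rightarrow> 'a list" where
  "subword xs p q = take (Suc q - p) (drop p xs)"

definition sym_gens :: "('a, 'b) monoid_scheme \<Rightarrow> 'a set \<Rightarrow> 'a set" where
  "sym_gens G S = (S \<union> (\<lambda>s. inv\<^bsub>G\<^esub> s) ` S) - {\<one>\<^bsub>G\<^esub>}"

text \<open>Simple relation s_1 ... s_n = e (0-based indices internally).\<close>
definition simple_relation :: "('a, 'b) monoid_scheme \<Rightarrow> 'a set \<Rightarrow> 'a list \<Rightarrow> bool" where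
  "simple_relation G S xs \<longleftrightarrow>
     length xs > 2 \<and> set xs \<subseteq> sym_gens G S \<and> word_prod G xs = \<one>\<^bsub>G\<^esub> \<and>
     (\<forall>p q. p \<le> q \<and> q < length xs \<longrightarrow>
        (word_prod G (subword xs p q) = \<one>\<^bsub>G\<^esub> \<longleftrightarrow> p = 0 \<and> q = length xs - 1))"

text \<open>k-chordality; the bound min{j-i, n-j+i-2} is computed in int to avoid truncation.\<close>
definition k_chordal :: "('a, 'b) monoid_scheme \<Rightarrow> 'a set \<Rightarrow> nat \<Rightarrow> bool" where
  "k_chordal G S k \<longleftrightarrow>
     (\<forall>xs. simple_relation G S xs \<and> length xs \<ge> k \<longrightarrow>
        (\<exists>i j ys. i < j \<and> j < length xs \<and> set ys \<subseteq> sym_gens G S \<and>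
           word_prod G (subword xs i j) = word_prod G ys \<and>
           int (length ys) \<le> min (int j - int i) (int (length xs) - int j + int i - 2)))"

text \<open>The group Z^2 = <a,b | aba^{-1}b^{-1}>, realised as int \<times> int under addition,
  with a = (1,0) and b = (0,1).\<close>
definition Z2 :: "(int \<times> int) monoid" where
  "Z2 = \<lparr>carrier = UNIV, mult = (\<lambda>x y. (fst x + fst y, snd x + snd y)), one = (0, 0)\<rparr>"

end

theory Submission
  imports Defs "HOL-Library.Product_Plus"
begin

text \<open>
  Words over \<open>a\<^sup>\<plusminus>\<^sup>1, b\<^sup>\<plusminus>\<^sup>1\<close> are lattice walks, a relation is a closed walk, and a subword
  can be replaced by a word of length equal to the taxicab norm of its displacement.
  A closed walk of length at least 5 uses some step \<open>s\<close> and its inverse \<open>-s\<close> twice each.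
  Cutting it at an occurrence of \<open>s\<close> and an occurrence of \<open>-s\<close> with no \<open>\<plusminus>s\<close> in between
  leaves both \<open>s\<close> and \<open>-s\<close> on each of the two arcs, so neither arc is geodesic, and
  replacing one arc by a geodesic is a chord.
\<close>

definition unit_steps :: "(int \<times> int) set" where
  "unit_steps = {(1, 0), (-1, 0), (0, 1), (0, -1)}"

definition taxicab_norm :: "int \<times> int \<Rightarrow> int" where
  "taxicab_norm v = \<bar>fst v\<bar> + \<bar>snd v\<bar>"

lemma taxicab_norm_uminus [simp]: "taxicab_norm (- v) = taxicab_norm v"
  by (simp add: taxicab_norm_def)

lemma word_prod_Z2: "word_prod Z2 w = sum_list w"
  by (induction w) (auto simp: word_prod_def Z2_def zero_prod_def plus_prod_def)

lemma one_Z2: "\<one>\<^bsub>Z2\<^esub> = 0"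
  by (simp add: Z2_def zero_prod_def)

lemma inv_Z2: "inv\<^bsub>Z2\<^esub> v = - v"
  unfolding m_inv_def by (rule the_equality) (auto simp: Z2_def prod_eq_iff)

lemma sym_gens_Z2: "sym_gens Z2 {(1, 0), (0, 1)} = unit_steps"
  by (auto simp: sym_gens_def inv_Z2 one_Z2 unit_steps_def zero_prod_def)

lemma sum_list_unit_steps:
  assumes "set w \<subseteq> unit_steps"
  shows "sum_list w = (int (count_list w (1, 0)) - int (count_list w (-1, 0)),
                       int (count_list w (0, 1)) - int (count_list w (0, -1)))"
  using assms by (induction w) (auto simp: unit_steps_def zero_prod_def)

lemma length_unit_steps:
  assumes "set w \<subseteq> unit_steps"
  shows "length w = count_list w (1, 0) + count_list w (-1, 0) +
                    count_list w (0, 1) + count_list w (0, -1)"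
  using assms by (induction w) (auto simp: unit_steps_def)

lemma taxicab_norm_sum_list_le_length_minus_2:
  assumes "set w \<subseteq> unit_steps" "s \<in> set w" "- s \<in> set w"
  shows "taxicab_norm (sum_list w) + 2 \<le> int (length w)"
proof -
  have "s \<in> unit_steps" "count_list w s \<noteq> 0" "count_list w (- s) \<noteq> 0"
    using assms by (auto simp: count_list_0_iff)
  then show ?thesis
    using sum_list_unit_steps[OF assms(1)] length_unit_steps[OF assms(1)]
    by (auto simp: unit_steps_def taxicab_norm_def)
qed

lemma closed_unit_step_walk_repeats_step:
  assumes "set w \<subseteq> unit_steps" "sum_list w = 0" "5 \<le> length w"
  obtains s where "s \<in> unit_steps" "2 \<le> count_list w s" "2 \<le> count_list w (- s)"
proof -
  have balanced: "count_list w (-1, 0) = count_list w (1, 0)"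
    "count_list w (0, -1) = count_list w (0, 1)"
    using assms(2) sum_list_unit_steps[OF assms(1)] by (auto simp: zero_prod_def)
  then have "2 \<le> count_list w (1, 0) \<or> 2 \<le> count_list w (0, 1)"
    using assms(3) length_unit_steps[OF assms(1)] by linarith
  then show ?thesis
    using that[of "(1, 0)"] that[of "(0, 1)"] balanced by (auto simp: unit_steps_def)
qed

lemma exists_unit_step_word_of_taxicab_length:
  "\<exists>ys. set ys \<subseteq> unit_steps \<and> sum_list ys = v \<and> int (length ys) = taxicab_norm v"
proof -
  obtain a b where v: "v = (a, b)" by fastforce
  define ys where "ys = replicate (nat \<bar>a\<bar>) (sgn a, 0) @ replicate (nat \<bar>b\<bar>) (0, sgn b)"
  have sum_list_replicate_pair: "sum_list (replicate n (c, d)) = (int n * c, int n * d)"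
    for n :: nat and c d :: int
    by (induction n) (auto simp: zero_prod_def algebra_simps)
  have "set ys \<subseteq> unit_steps"
    by (auto simp: ys_def unit_steps_def sgn_if)
  moreover have "sum_list ys = v"
    by (simp add: ys_def v sum_list_replicate_pair abs_mult_sgn)
  ultimately show ?thesis
    by (intro exI[of _ ys]) (simp add: ys_def v taxicab_norm_def)
qed

lemma split_list_adjacent_occurrences:
  assumes "x \<in> set xs" "y \<in> set xs" "x \<noteq> y"
  shows "\<exists>cs u ds v bs. xs = cs @ u # ds @ v # bs \<and> {u, v} = {x, y} \<and>
           x \<notin> set ds \<and> y \<notin> set ds"
  using assms
proof (induction xs)
  case Nil
  then show ?case by simp
next
  case (Cons a xs)
  show ?case
  proof (cases "x \<in> set xs \<and> y \<in> set xs")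
    case True
    with Cons.IH \<open>x \<noteq> y\<close> obtain cs u ds v bs where
      "xs = cs @ u # ds @ v # bs" "{u, v} = {x, y}" "x \<notin> set ds" "y \<notin> set ds"
      by blast
    then show ?thesis
      by (intro exI[of _ "a # cs"]) auto
  next
    case False
    then obtain z where z: "{a, z} = {x, y}" "z \<in> set xs" "a \<notin> set xs"
      using Cons.prems by auto
    then obtain ds bs where "xs = ds @ z # bs" "z \<notin> set ds"
      by (meson split_list_first)
    with z show ?thesis
      by (intro exI[of _ "[]"]) fastforce
  qed
qed

lemma split_list_with_pair_in_both_parts:
  fixes xs :: "'a list"
  assumes "2 \<le> count_list xs x" "2 \<le> count_list xs y" "x \<noteq> y"
  obtains cs w bs where "xs = cs @ w @ bs" "2 \<le> length w"
    "x \<in> set w" "y \<in> set w" "x \<in> set (cs @ bs)" "y \<in> set (cs @ bs)"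
proof -
  have "x \<in> set xs" "y \<in> set xs"
    using assms(1,2) by (metis count_notin not_numeral_le_zero)+
  then obtain cs u ds v bs where split: "xs = cs @ u # ds @ v # bs" "{u, v} = {x, y}"
    "x \<notin> set ds" "y \<notin> set ds"
    using split_list_adjacent_occurrences[of x xs y] assms(3) by blast
  define w where "w = u # ds @ [v]"
  have xs: "xs = cs @ w @ bs"
    using split(1) by (simp add: w_def)
  have "count_list w x = 1" "count_list w y = 1"
    using split(2-4) assms(3) by (auto simp: w_def doubleton_eq_iff)
  with assms(1,2) have "count_list (cs @ bs) x \<noteq> 0" "count_list (cs @ bs) y \<noteq> 0"
    unfolding xs by auto
  then have "x \<in> set (cs @ bs)" "y \<in> set (cs @ bs)"
    by (simp_all add: count_list_0_iff)
  moreover have "x \<in> set w" "y \<in> set w" "2 \<le> length w"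
    using split(2) by (auto simp: w_def doubleton_eq_iff)
  ultimately show ?thesis
    using that xs by blast
qed

lemma chord_of_non_geodesic_arcs:
  assumes "xs = cs @ w @ bs" "2 \<le> length w"
    and "taxicab_norm (sum_list w) < int (length w)"
    and "taxicab_norm (sum_list w) < int (length (cs @ bs))"
  shows "\<exists>i j ys. i < j \<and> j < length xs \<and> set ys \<subseteq> unit_steps \<and>
           sum_list (subword xs i j) = sum_list ys \<and>
           int (length ys) \<le> min (int j - int i) (int (length xs) - int j + int i - 2)"
proof -
  obtain ys where ys: "set ys \<subseteq> unit_steps" "sum_list ys = sum_list w"
    "int (length ys) = taxicab_norm (sum_list w)"
    using exists_unit_step_word_of_taxicab_length by blast
  have "subword xs (length cs) (length cs + length w - 1) = w"
    using assms(1,2) by (simp add: subword_def)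
  with assms ys show ?thesis
    by (intro exI[of _ "length cs"] exI[of _ "length cs + length w - 1"] exI[of _ ys]) auto
qed

theorem proposition1:
  shows "k_chordal Z2 {(1, 0), (0, 1)} 5"
  unfolding k_chordal_def sym_gens_Z2 word_prod_Z2
proof (intro allI impI)
  fix xs :: "(int \<times> int) list"
  assume "simple_relation Z2 {(1, 0), (0, 1)} xs \<and> 5 \<le> length xs"
  then have steps: "set xs \<subseteq> unit_steps" and closed: "sum_list xs = 0" and "5 \<le> length xs"
    by (auto simp: simple_relation_def sym_gens_Z2 word_prod_Z2 one_Z2)
  then obtain s where s: "s \<in> unit_steps" "2 \<le> count_list xs s" "2 \<le> count_list xs (- s)"
    by (rule closed_unit_step_walk_repeats_step)
  have "s \<noteq> - s"
    using s(1) by (auto simp: unit_steps_def)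
  with s(2,3) obtain cs w bs where xs: "xs = cs @ w @ bs" "2 \<le> length w"
    and in_arc: "s \<in> set w" "- s \<in> set w"
    and in_complement: "s \<in> set (cs @ bs)" "- s \<in> set (cs @ bs)"
    by (rule split_list_with_pair_in_both_parts)
  have "taxicab_norm (sum_list w) + 2 \<le> int (length w)"
    using steps xs(1) in_arc by (intro taxicab_norm_sum_list_le_length_minus_2) auto
  moreover have "taxicab_norm (sum_list (cs @ bs)) + 2 \<le> int (length (cs @ bs))"
    using steps xs(1) in_complement by (intro taxicab_norm_sum_list_le_length_minus_2) auto
  moreover have "sum_list (cs @ bs) = - sum_list w"
    using closed xs(1) by (simp add: eq_neg_iff_add_eq_0 add_ac)
  ultimately show "\<exists>i j ys. i < j \<and> j < length xs \<and> set ys \<subseteq> unit_steps \<and>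
           sum_list (subword xs i j) = sum_list ys \<and>
           int (length ys) \<le> min (int j - int i) (int (length xs) - int j + int i - 2)"
    using xs by (intro chord_of_non_geodesic_arcs) auto
qed

end
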